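(* Let $k$ be a field of characteristic $2$ and let $n \geq 1$. Let $\mathfrak{h}_n$ be the Heisenberg Lie algebra of dimension $2n+1$ over $k$. Then \[ \sum_{i \geq 0} \dim_k H_{i}(\mathfrak{h}_n;k)\, t^i = \frac{(1+t^3)(1+t)^{2n} + (t+t^2)(2t)^n}{1+t^2}, \] where the right-hand side, computed with integer coefficients, is a polynomial in $t$.
   Context: The Heisenberg Lie algebra $\mathfrak{h}_n$ over $k$ is the $k$-vector space with basis $\{z, x_1,\dots,x_n, y_1,\dots,y_n\}$ whose only nonzero Lie brackets of basis elements are $[x_i,y_i] = -[y_i,x_i] = z$ for $i=1,\dots,n$. $H_i(\mathfrak{h}_n;k)$ denotes the $i$-th Lie algebra homology of $\mathfrak{h}_n$ with trivial coefficients in $k$, i.e. the $i$-th homology of the Chevalley–Eilenberg complex $\cdots \to \bigwedge^{i}\mathfrak{h}_n \to \bigwedge^{i-1}\mathfrak{h}_n \to \cdots \to \bigwedge^1 \mathfrak{h}_n \to \bigwedge^0\mathfrak{h}_n = k \to 0$ with differential $d(w_1\wedge\cdots\wedge w_p) = \sum_{i<j} (-1)^{i+j}[w_i,w_j]\wedge w_1\wedge\cdots\wedge\widehat{w_i}\wedge\cdots\wedge\widehat{w_j}\wedge\cdots\wedge w_p$ (so $H_0 = k$). *)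

theory Defs
  imports "HOL-Library.Function_Algebras" "HOL-Computational_Algebra.Formal_Power_Series"
begin

text \<open>Basis of the Heisenberg Lie algebra h_n indexed by {0..2n}:
  index 0 is z, index i (1 <= i <= n) is x_i, index n+i is y_i.
  This ordering of the basis is used to form the standard basis
  w_S = w_{s_1} /\ ... /\ w_{s_p} (s_1 < ... < s_p) of the p-th exterior power,
  so a p-chain is a function from p-subsets of {0..2n} to k.\<close>

definition heis_idx :: "nat \<Rightarrow> nat set" where
  "heis_idx n = {0..2*n}"

text \<open>Structure constants: [w_a, w_b] = sum_c heis_br n a b c * w_c.\<close>
definition heis_br :: "nat \<Rightarrow> nat \<Rightarrow> nat \<Rightarrow> nat \<Rightarrow> 'k::field" where
  "heis_br n a b c =
     (if c = 0 \<and> 1 \<le> a \<and> a \<le> n \<and> b = a + n then 1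
      else if c = 0 \<and> 1 \<le> b \<and> b \<le> n \<and> a = b + n then -1
      else 0)"

definition fscale :: "'k::field \<Rightarrow> ('a \<Rightarrow> 'k) \<Rightarrow> ('a \<Rightarrow> 'k)" where
  "fscale c f = (\<lambda>x. c * f x)"

text \<open>Coordinates of w_c /\ w_R in the standard basis.\<close>
definition wedge1 :: "nat \<Rightarrow> nat set \<Rightarrow> nat set \<Rightarrow> 'k::field" where
  "wedge1 c R = (\<lambda>T. if c \<in> R then 0
      else if T = insert c R then (-1) ^ card {r\<in>R. r < c} else 0)"

definition pos :: "nat set \<Rightarrow> nat \<Rightarrow> nat" where
  "pos S a = card {t\<in>S. t < a} + 1"

text \<open>Chevalley--Eilenberg differential of the basis vector w_S:
  d(w_S) = sum_{i<j} (-1)^(i+j) [w_{s_i}, w_{s_j}] /\ w_{S - {s_i,s_j}}.\<close>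
definition ce_d_basis :: "nat \<Rightarrow> nat set \<Rightarrow> nat set \<Rightarrow> 'k::field" where
  "ce_d_basis n S = (\<lambda>T. \<Sum>a\<in>S. \<Sum>b\<in>S.
      if a < b then (-1) ^ (pos S a + pos S b) *
        (\<Sum>c\<in>heis_idx n. heis_br n a b c * wedge1 c (S - {a, b}) T)
      else 0)"

definition ce_basis :: "nat \<Rightarrow> nat \<Rightarrow> nat set set" where
  "ce_basis n p = {S. S \<subseteq> heis_idx n \<and> card S = p}"

definition ce_chains :: "nat \<Rightarrow> nat \<Rightarrow> (nat set \<Rightarrow> 'k::field) set" where
  "ce_chains n p = {f. \<forall>S. f S \<noteq> 0 \<longrightarrow> S \<in> ce_basis n p}"

definition ce_d :: "nat \<Rightarrow> nat \<Rightarrow> (nat set \<Rightarrow> 'k::field) \<Rightarrow> (nat set \<Rightarrow> 'k)" where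
  "ce_d n p f = (\<lambda>T. \<Sum>S\<in>ce_basis n p. f S * ce_d_basis n S T)"

definition heis_homology_dim :: "'k::field itself \<Rightarrow> nat \<Rightarrow> nat \<Rightarrow> nat" where
  "heis_homology_dim _ n i =
     vector_space.dim (fscale :: 'k \<Rightarrow> _) {f \<in> (ce_chains n i :: (nat set \<Rightarrow> 'k) set). ce_d n i f = 0}
     - vector_space.dim (fscale :: 'k \<Rightarrow> _) (ce_d n (Suc i) ` (ce_chains n (Suc i) :: (nat set \<Rightarrow> 'k) set))"

end

theory Submission
  imports Defs
begin

text \<open>
  In characteristic 2 all signs disappear: the differential sends the basis vector w_S to the
  sum of z \<and> w_(S - p) over the pairs p = {x_i, y_i} contained in S, and to 0 if z \<in> S.
  Call a pair balanced in S if S contains both or none of its elements, and call the first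
  balanced pair the pivot of S. The boundaries of the w_S whose pivot pair lies in S are
  linearly independent, because z \<and> w_(S - pivot pair) occurs in the boundary of no other such
  set, and they span the image: if the pivot pair v is disjoint from S, then d w_S is the sum
  of the d w_(S \<union> v - p) over the pairs p contained in S, all other terms cancelling in pairs.
  Hence the rank of d_q is the number t_q of q-sets with pivot inside, and rank--nullity gives
  dim H_q = C(2n+1, q) - t_q - t_(q+1). Adding the pivot pair matches the q-sets with pivot
  outside with the (q+2)-sets with pivot inside, and the 2^n sets without balanced pair all
  have size n, so t_q + t_(q+2) + [q = n] 2^n = C(2n, q). As power series this says
  (1 + t^2) \<Sum> t_q t^q = t^2 ((1 + t)^(2n) - (2t)^n), which yields the formula.
\<close>

section \<open>Linear algebra\<close>

lemma sum_fun_apply: "(\<Sum>x\<in>A. f x) y = (\<Sum>x\<in>A. f x y)"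
  by (induction A rule: infinite_finite_induct) auto

lemma (in module) span_Int_span_disjoint:
  assumes "independent (A \<union> B)" and "A \<inter> B = {}"
  shows "span A \<inter> span B = {0}"
proof -
  have "x = 0" if "x \<in> span A" "x \<in> span B" for x
  proof -
    obtain s u where s: "finite s" "s \<subseteq> A" and x_s: "x = (\<Sum>a\<in>s. u a *s a)"
      using \<open>x \<in> span A\<close> unfolding span_explicit by blast
    obtain t w where t: "finite t" "t \<subseteq> B" and x_t: "x = (\<Sum>b\<in>t. w b *s b)"
      using \<open>x \<in> span B\<close> unfolding span_explicit by blast
    define c where "c v = (if v \<in> s then u v else - w v)" for v
    have st: "s \<inter> t = {}" using s t assms(2) by blast
    have "(\<Sum>v\<in>s. c v *s v) = (\<Sum>a\<in>s. u a *s a)" by (simp add: c_def)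
    moreover have "(\<Sum>v\<in>t. c v *s v) = - (\<Sum>b\<in>t. w b *s b)"
      unfolding sum_negf[symmetric] using st by (intro sum.cong) (auto simp: c_def)
    ultimately have "(\<Sum>v\<in>s \<union> t. c v *s v) = (\<Sum>a\<in>s. u a *s a) - (\<Sum>b\<in>t. w b *s b)"
      using s t st by (simp add: sum.union_disjoint)
    also have "\<dots> = 0" using x_s x_t by simp
    finally have "c v = 0" if "v \<in> s" for v
      using independentD[OF assms(1)] s t that by blast
    then show "x = 0" using x_s by (simp add: c_def)
  qed
  then show ?thesis by (auto intro: span_zero)
qed

lemma (in vector_space_pair) dim_kernel_plus_dim_image:
  assumes f: "Vector_Spaces.linear s1 s2 f" and V: "vs1.subspace V"
    and B: "finite B" "V \<subseteq> vs1.span B"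
  shows "vs1.dim {x \<in> V. f x = 0} + vs2.dim (f ` V) = vs1.dim V"
proof -
  interpret f: Vector_Spaces.linear s1 s2 f by (fact f)
  define K where "K = {x \<in> V. f x = 0}"
  obtain BK where BK: "BK \<subseteq> K" "vs1.independent BK" "K \<subseteq> vs1.span BK" "card BK = vs1.dim K"
    using vs1.basis_exists by blast
  obtain BV where BV: "BK \<subseteq> BV" "BV \<subseteq> V" "vs1.independent BV" "V \<subseteq> vs1.span BV"
    using vs1.maximal_independent_subset_extend[of BK V] BK K_def by auto
  have "finite BV" using vs1.independent_span_bound[OF B(1) BV(3)] BV(2) B(2) by blast
  have "card BV = vs1.dim V" using vs1.basis_card_eq_dim[OF BV(2,4,3)] .
  define C where "C = BV - BK"
  have span_BV: "vs1.span BV = V" using vs1.span_subspace[OF BV(2,4) V] .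
  have C_BK: "vs1.span C \<inter> vs1.span BK = {0}"
    using vs1.span_Int_span_disjoint[of C BK] BV(1,3) by (simp add: C_def Un_absorb2 Int_commute)
  have "inj_on f (vs1.span C)"
  proof (rule f.inj_on_iff_eq_0[THEN iffD2, OF vs1.subspace_span], intro ballI impI)
    fix x assume "x \<in> vs1.span C" "f x = 0"
    moreover have "vs1.span C \<subseteq> V" using vs1.span_mono[of C BV] span_BV by (auto simp: C_def)
    ultimately have "x \<in> vs1.span BK" using BK(3) K_def by blast
    then show "x = 0" using C_BK \<open>x \<in> vs1.span C\<close> by blast
  qed
  then have indep_fC: "vs2.independent (f ` C)" and card_fC: "card (f ` C) = card C"
    using f.independent_injective_image[of C] vs1.independent_mono[OF BV(3)]
      card_image[OF inj_on_subset[OF _ vs1.span_superset]] by (auto simp: C_def)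
  have "f ` BV \<subseteq> insert 0 (f ` C)" using BK(1) K_def by (auto simp: C_def)
  then have "vs2.span (f ` BV) = vs2.span (f ` C)"
    using vs2.span_mono[of "f ` BV" "insert 0 (f ` C)"] vs2.span_mono[of "f ` C" "f ` BV"]
    by (auto simp: C_def)
  then have "vs2.dim (f ` V) = card C"
    using indep_fC card_fC span_BV f.span_image[of BV]
    by (metis vs2.dim_span vs2.dim_eq_card_independent)
  moreover have "card C = card BV - card BK"
    using BV(1) \<open>finite BV\<close> by (simp add: C_def card_Diff_subset finite_subset)
  moreover have "card BK \<le> card BV" using BV(1) \<open>finite BV\<close> by (simp add: card_mono)
  ultimately show ?thesis using BK(4) \<open>card BV = vs1.dim V\<close> K_def by simp
qed

interpretation chains: vector_space "fscale :: 'k::field \<Rightarrow> ('a \<Rightarrow> 'k) \<Rightarrow> 'a \<Rightarrow> 'k"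
  by unfold_locales (auto simp: fscale_def algebra_simps fun_eq_iff)

lemma fscale_apply [simp]: "fscale c f x = c * f x"
  by (simp add: fscale_def)

lemma chains_dim_biorthogonal:
  fixes g :: "'j \<Rightarrow> 'a \<Rightarrow> 'k::field" and l :: "'j \<Rightarrow> 'a"
  assumes "finite J"
    and biorth: "\<And>j j'. j \<in> J \<Longrightarrow> j' \<in> J \<Longrightarrow> g j' (l j) = (if j' = j then 1 else 0)"
    and "g ` J \<subseteq> V" and "V \<subseteq> chains.span (g ` J)"
  shows "chains.dim V = card J"
proof -
  have inj: "inj_on g J"
  proof
    fix j j' assume j: "j \<in> J" "j' \<in> J" and "g j = g j'"
    then have "g j' (l j) = 1" using biorth[of j j] by simp
    then show "j = j'" using biorth[OF j] by (cases "j' = j") simp_all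
  qed
  have "chains.independent (g ` J)"
    unfolding chains.independent_explicit_module
  proof (intro allI impI)
    fix t u w assume t: "finite t" "t \<subseteq> g ` J" "(\<Sum>v\<in>t. fscale (u v) v) = 0" "w \<in> t"
    then obtain j where j: "j \<in> J" "w = g j" by auto
    have "(\<Sum>v\<in>t. u v * v (l j)) = (\<Sum>v\<in>t. if v = w then u v else 0)"
    proof (rule sum.cong)
      fix v assume "v \<in> t"
      then obtain j' where j': "j' \<in> J" "v = g j'" using t(2) by auto
      then show "u v * v (l j) = (if v = w then u v else 0)"
        using biorth[OF j(1) j'(1)] by (simp add: j(2) inj_on_eq_iff[OF inj j'(1) j(1)])
    qed simp
    also have "\<dots> = u w" using t(1,4) by simp
    finally show "u w = 0" using fun_cong[OF t(3), of "l j"] by (simp add: sum_fun_apply)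
  qed
  then show ?thesis
    using chains.dim_unique[OF assms(3,4)] card_image[OF inj] by simp
qed

section \<open>Basis sets, pairs and pivots\<close>

lemma ce_basis_finite: "S \<in> ce_basis n q \<Longrightarrow> finite S"
  using finite_subset[of S "{0..2*n}"] by (simp add: ce_basis_def heis_idx_def)

lemma finite_ce_basis: "finite (ce_basis n q)"
  by (rule finite_subset[of _ "Pow {0..2*n}"]) (auto simp: ce_basis_def heis_idx_def)

lemma card_ce_basis: "card (ce_basis n q) = (2*n+1) choose q"
  by (simp add: ce_basis_def heis_idx_def n_subsets)

definition pair :: "nat \<Rightarrow> nat \<Rightarrow> nat set" where
  "pair n i = {i, i + n}"

lemma card_pair: "i \<in> {1..n} \<Longrightarrow> card (pair n i) = 2"
  by (simp add: pair_def)

definition balanced :: "nat \<Rightarrow> nat set \<Rightarrow> nat \<Rightarrow> bool" where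
  "balanced n S i \<longleftrightarrow> (i \<in> S \<longleftrightarrow> i + n \<in> S)"

definition transversal :: "nat \<Rightarrow> nat set \<Rightarrow> bool" where
  "transversal n S \<longleftrightarrow> (\<forall>i\<in>{1..n}. \<not> balanced n S i)"

text \<open>Only meaningful if \<open>S\<close> is not transversal; otherwise \<open>LEAST\<close> is taken over the empty set.\<close>

definition pivot :: "nat \<Rightarrow> nat set \<Rightarrow> nat" where
  "pivot n S = (LEAST i. i \<in> {1..n} \<and> balanced n S i)"

definition pivot_in :: "nat \<Rightarrow> nat set \<Rightarrow> bool" where
  "pivot_in n S \<longleftrightarrow> 0 \<notin> S \<and> \<not> transversal n S \<and> pivot n S \<in> S"

definition pivot_out :: "nat \<Rightarrow> nat set \<Rightarrow> bool" where
  "pivot_out n S \<longleftrightarrow> 0 \<notin> S \<and> \<not> transversal n S \<and> pivot n S \<notin> S"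

definition full_pairs :: "nat \<Rightarrow> nat set \<Rightarrow> nat set" where
  "full_pairs n S = {i \<in> {1..n}. pair n i \<subseteq> S}"

definition pivot_swap :: "nat \<Rightarrow> nat set \<Rightarrow> nat \<Rightarrow> nat set" where
  "pivot_swap n S i = S \<union> pair n (pivot n S) - pair n i"

lemma pivot_balanced:
  assumes "\<not> transversal n S"
  shows "pivot n S \<in> {1..n}" "balanced n S (pivot n S)"
proof -
  have "\<exists>i. i \<in> {1..n} \<and> balanced n S i" using assms by (auto simp: transversal_def)
  from LeastI_ex[OF this] show "pivot n S \<in> {1..n}" "balanced n S (pivot n S)"
    by (simp_all add: pivot_def)
qed

lemma pivot_le: "i \<in> {1..n} \<Longrightarrow> balanced n S i \<Longrightarrow> pivot n S \<le> i"
  unfolding pivot_def by (rule Least_le) simp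

lemma full_pairs_balanced: "i \<in> full_pairs n S \<Longrightarrow> balanced n S i"
  by (simp add: full_pairs_def pair_def balanced_def)

lemma finite_full_pairs [simp]: "finite (full_pairs n S)"
  by (rule finite_subset[of _ "{1..n}"]) (auto simp: full_pairs_def)

lemma pivot_add_remove_pair:
  assumes "\<not> transversal n S" and i: "i \<in> {1..n}" "pivot n S \<le> i"
    and S': "S' = S \<union> pair n i \<or> S' = S - pair n i"
  shows "\<not> transversal n S'" and "pivot n S' = pivot n S"
proof -
  have bal: "balanced n S' j \<longleftrightarrow> j = i \<or> balanced n S j" if "j \<in> {1..n}" for j
    using S' that i(1) by (auto simp: balanced_def pair_def)
  note piv = pivot_balanced[OF assms(1)]
  show "\<not> transversal n S'" using piv bal by (auto simp: transversal_def)
  then have "pivot n S' \<in> {1..n}" "balanced n S' (pivot n S')" by (rule pivot_balanced)+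
  then have "pivot n S \<le> pivot n S'" using bal i(2) pivot_le by metis
  moreover have "pivot n S' \<le> pivot n S" using piv bal by (intro pivot_le) auto
  ultimately show "pivot n S' = pivot n S" by simp
qed

lemma pivot_in_full_pairs: "pivot_in n T \<Longrightarrow> pivot n T \<in> full_pairs n T"
  using pivot_balanced[of n T]
  by (auto simp: pivot_in_def full_pairs_def pair_def balanced_def)

lemma pivot_in_remove_pivot_pair:
  assumes "pivot_in n T"
  shows "pivot_out n (T - pair n (pivot n T))" "pivot n (T - pair n (pivot n T)) = pivot n T"
proof -
  have v: "pivot n T \<in> full_pairs n T" using pivot_in_full_pairs[OF assms] .
  have "\<not> transversal n (T - pair n (pivot n T))" "pivot n (T - pair n (pivot n T)) = pivot n T"
    using pivot_add_remove_pair[of n T "pivot n T" "T - pair n (pivot n T)"] assms v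
    by (simp_all add: pivot_in_def full_pairs_def)
  then show "pivot_out n (T - pair n (pivot n T))" "pivot n (T - pair n (pivot n T)) = pivot n T"
    using assms by (simp_all add: pivot_out_def pivot_in_def pair_def)
qed

definition lead_face :: "nat \<Rightarrow> nat set \<Rightarrow> nat set" where
  "lead_face n T = insert 0 (T - pair n (pivot n T))"

lemma lead_face_unique:
  assumes T: "pivot_in n T" and T': "pivot_in n T'" and i: "i \<in> full_pairs n T'"
    and eq: "lead_face n T = insert 0 (T' - pair n i)"
  shows "T' = T \<and> i = pivot n T"
proof -
  define v where "v = pivot n T"
  have R: "T - pair n v = T' - pair n i"
    using eq T T' insert_ident[of 0 "T - pair n v" "T' - pair n i"]
    by (simp add: pivot_in_def lead_face_def v_def)
  have v: "v \<in> full_pairs n T" using pivot_in_full_pairs[OF T] by (simp add: v_def)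
  have "pivot n (T - pair n v) = v"
    using pivot_add_remove_pair(2)[of n T v "T - pair n v"] T v
    by (simp add: pivot_in_def full_pairs_def v_def)
  moreover have "pivot n (T' - pair n i) = pivot n T'"
    using pivot_add_remove_pair(2)[of n T' i "T' - pair n i"] T' i
      pivot_le[OF _ full_pairs_balanced[OF i]]
    by (simp add: pivot_in_def full_pairs_def)
  ultimately have v': "pivot n T' = v" using R by simp
  show ?thesis
  proof (cases "i = v")
    case True
    have "T = (T - pair n v) \<union> pair n v" using v by (auto simp: full_pairs_def)
    also have "\<dots> = T'" using R True i by (auto simp: full_pairs_def)
    finally show ?thesis using True by (simp add: v_def)
  next
    case False
    have "v \<in> T' - pair n i"
      using False T' v' i v by (auto simp: pivot_in_def full_pairs_def pair_def)
    moreover have "v \<notin> T - pair n v" by (simp add: pair_def)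
    ultimately show ?thesis using R by simp
  qed
qed

locale pivot_out_set =
  fixes n :: nat and S :: "nat set"
  assumes pivot_out: "pivot_out n S"
begin

abbreviation "v \<equiv> pivot n S"

lemma pivot_out_facts: "0 \<notin> S" "\<not> transversal n S" "v \<in> {1..n}" "v \<notin> S" "v + n \<notin> S"
  using pivot_out pivot_balanced[of n S] by (auto simp: pivot_out_def balanced_def)

lemma pivot_less:
  assumes "i \<in> full_pairs n S"
  shows "v < i"
proof -
  have "v \<le> i"
    using pivot_le[OF _ full_pairs_balanced[OF assms]] assms by (simp add: full_pairs_def)
  moreover have "i \<in> S" using assms by (auto simp: full_pairs_def pair_def)
  ultimately show ?thesis using pivot_out_facts(4) by (cases "v = i") auto
qed

lemma pivot_add_pivot_pair: "\<not> transversal n (S \<union> pair n v)" "pivot n (S \<union> pair n v) = v"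
  using pivot_add_remove_pair[OF pivot_out_facts(2,3) order_refl, of "S \<union> pair n v"] by simp_all

lemma pivot_in_add_pivot_pair: "pivot_in n (S \<union> pair n v)"
  using pivot_add_pivot_pair pivot_out_facts by (simp add: pivot_in_def pair_def)

lemma pivot_in_pivot_swap:
  assumes "i \<in> full_pairs n S"
  shows "pivot_in n (pivot_swap n S i)"
proof -
  have i: "i \<in> {1..n}" "v < i" using assms pivot_less[OF assms] by (auto simp: full_pairs_def)
  have "\<not> transversal n (pivot_swap n S i)" "pivot n (pivot_swap n S i) = v"
    using pivot_add_remove_pair[OF pivot_add_pivot_pair(1) i(1), of "pivot_swap n S i"] i(2)
    by (simp_all add: pivot_add_pivot_pair(2) pivot_swap_def)
  moreover have "0 \<notin> pivot_swap n S i" "v \<in> pivot_swap n S i"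
    using pivot_out_facts i by (auto simp: pivot_swap_def pair_def)
  ultimately show ?thesis by (simp add: pivot_in_def)
qed

lemma full_pairs_pivot_swap:
  assumes "i \<in> full_pairs n S"
  shows "full_pairs n (pivot_swap n S i) = insert v (full_pairs n S - {i})"
  using assms pivot_out_facts pivot_less[OF assms]
  by (auto simp: full_pairs_def pivot_swap_def pair_def)

lemma pivot_swap_minus_pivot_pair: "pivot_swap n S i - pair n v = S - pair n i"
  using pivot_out_facts by (auto simp: pivot_swap_def pair_def)

lemma pivot_swap_in_ce_basis:
  assumes S: "S \<in> ce_basis n q" and i: "i \<in> full_pairs n S"
  shows "pivot_swap n S i \<in> ce_basis n q"
proof -
  have sub: "pair n i \<subseteq> S" and i_range: "i \<in> {1..n}" using i by (simp_all add: full_pairs_def)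
  have "pivot_swap n S i = (S - pair n i) \<union> pair n v"
    using pivot_less[OF i] pivot_out_facts i_range by (auto simp: pivot_swap_def pair_def)
  also have "card \<dots> = card (S - pair n i) + card (pair n v)"
    by (rule card_Un_disjoint) (use ce_basis_finite[OF S] pivot_out_facts in \<open>auto simp: pair_def\<close>)
  also have "\<dots> = card S"
    using card_Diff_subset[OF _ sub] card_mono[OF ce_basis_finite[OF S] sub] card_pair[OF i_range]
      card_pair[OF pivot_out_facts(3)] by (simp add: pair_def)
  finally show ?thesis
    using S pivot_out_facts(3) by (auto simp: ce_basis_def pivot_swap_def pair_def heis_idx_def)
qed

end

section \<open>The differential in characteristic 2\<close>

lemma char2_add_self:
  assumes "CHAR('k::ring_1) = 2"
  shows "(x::'k) + x = 0"
  by (simp add: neg_eq_iff_add_eq_0[symmetric] uminus_CHAR_2[OF assms])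

lemma sum_off_diagonal_sym_char2:
  assumes "CHAR('k::ring_1) = 2" and "finite P" and sym: "\<And>i j. h i j = h j i"
  shows "(\<Sum>i\<in>P. \<Sum>j\<in>P - {i}. h i j) = (0::'k)"
  using \<open>finite P\<close>
proof (induction P rule: finite_induct)
  case (insert a P)
  have "(\<Sum>i\<in>insert a P. \<Sum>j\<in>insert a P - {i}. h i j) =
      (\<Sum>j\<in>P. h a j) + (\<Sum>i\<in>P. h i a + (\<Sum>j\<in>P - {i}. h i j))"
    using insert.hyps by (auto simp: insert_Diff_if intro!: sum.cong)
  also have "\<dots> = (\<Sum>j\<in>P. h a j + h a j)"
    using insert.IH by (simp add: sum.distrib sym)
  finally show ?case by (simp add: char2_add_self[OF assms(1)])
qed simp

definition char2_boundary :: "nat \<Rightarrow> nat set \<Rightarrow> nat set \<Rightarrow> 'k::field" where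
  "char2_boundary n T U =
     (if 0 \<in> T then 0 else \<Sum>i\<in>full_pairs n T. if U = insert 0 (T - pair n i) then 1 else 0)"

lemma char2_boundary_eq_0:
  assumes "0 \<in> T \<or> transversal n T"
  shows "char2_boundary n T = 0"
proof -
  have "full_pairs n T = {}" if "transversal n T"
    using that unfolding transversal_def full_pairs_def pair_def balanced_def by blast
  with assms show ?thesis by (cases "0 \<in> T") (simp_all add: char2_boundary_def fun_eq_iff)
qed

lemma char2_boundary_lead_face:
  assumes T: "pivot_in n T" and T': "pivot_in n T'"
  shows "char2_boundary n T' (lead_face n T) = (if T' = T then 1 else (0::'k::field))"
proof -
  have lead: "lead_face n T = insert 0 (T' - pair n i) \<longleftrightarrow> T' = T \<and> i = pivot n T"
    if "i \<in> full_pairs n T'" for i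
    using lead_face_unique[OF T T' that] by (auto simp: lead_face_def)
  have "0 \<notin> T'" using T' by (simp add: pivot_in_def)
  then have "char2_boundary n T' (lead_face n T) =
      (\<Sum>i\<in>full_pairs n T'. if lead_face n T = insert 0 (T' - pair n i) then 1 else 0)"
    by (simp add: char2_boundary_def)
  also have "\<dots> = (\<Sum>i\<in>full_pairs n T'. if T' = T \<and> i = pivot n T then 1 else (0::'k))"
    by (rule sum.cong) (simp_all add: lead)
  also have "\<dots> = (if T' = T then 1 else 0)"
    using pivot_in_full_pairs[OF T] by (cases "T' = T") simp_all
  finally show ?thesis .
qed

context pivot_out_set
begin

text \<open>In the boundary of \<open>pivot_swap n S i\<close> the face obtained by removing the pivot pair is a
  face of \<open>S\<close>; every other face is indexed by an ordered pair \<open>(i, j)\<close> of distinct full pairs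
  of \<open>S\<close> and cancels with the one indexed by \<open>(j, i)\<close>.\<close>

lemma char2_boundary_cancel:
  assumes "CHAR('k::field) = 2"
  shows "char2_boundary n S U +
    (\<Sum>i\<in>full_pairs n S. char2_boundary n (pivot_swap n S i) U) = (0::'k)"
proof -
  define P where "P = full_pairs n S"
  define ind where "ind W = (if U = insert 0 W then (1::'k) else 0)" for W
  define h where "h i j = ind (S \<union> pair n v - (pair n i \<union> pair n j))" for i j
  have "v \<notin> P" using pivot_out_facts(4) by (simp add: P_def full_pairs_def pair_def)
  have swap: "char2_boundary n (pivot_swap n S i) U = ind (S - pair n i) + (\<Sum>j\<in>P - {i}. h i j)"
    if i: "i \<in> P" for i
  proof -
    have "0 \<notin> pivot_swap n S i" using pivot_in_pivot_swap i by (simp add: pivot_in_def P_def)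
    then have "char2_boundary n (pivot_swap n S i) U =
        (\<Sum>j\<in>insert v (P - {i}). ind (pivot_swap n S i - pair n j))"
      using full_pairs_pivot_swap i by (simp add: char2_boundary_def ind_def P_def)
    also have "\<dots> = ind (pivot_swap n S i - pair n v) +
        (\<Sum>j\<in>P - {i}. ind (pivot_swap n S i - pair n j))"
      using \<open>v \<notin> P\<close> by (simp add: P_def)
    also have "\<dots> = ind (S - pair n i) + (\<Sum>j\<in>P - {i}. h i j)"
    proof -
      have "pivot_swap n S i - pair n j = S \<union> pair n v - (pair n i \<union> pair n j)" for j
        unfolding pivot_swap_def by blast
      then show ?thesis unfolding pivot_swap_minus_pivot_pair by (simp add: h_def)
    qed
    finally show ?thesis .
  qed
  have "(\<Sum>i\<in>P. char2_boundary n (pivot_swap n S i) U) =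
      (\<Sum>i\<in>P. ind (S - pair n i) + (\<Sum>j\<in>P - {i}. h i j))"
    using swap by (rule sum.cong[OF refl])
  also have "\<dots> = char2_boundary n S U + (\<Sum>i\<in>P. \<Sum>j\<in>P - {i}. h i j)"
    using pivot_out_facts(1) by (simp add: sum.distrib char2_boundary_def ind_def P_def)
  also have "(\<Sum>i\<in>P. \<Sum>j\<in>P - {i}. h i j) = 0"
    by (rule sum_off_diagonal_sym_char2[OF assms]) (auto simp: P_def h_def Un_commute)
  finally show ?thesis by (simp add: P_def char2_add_self[OF assms])
qed

end

lemma sum_heis_br_wedge1:
  assumes "a < b"
  shows "(\<Sum>c\<in>heis_idx n. heis_br n a b c * wedge1 c R U) =
    (if a \<in> {1..n} \<and> b = a + n \<and> 0 \<notin> R \<and> U = insert 0 R then 1 else (0::'k::field))"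
proof -
  have "(\<Sum>c\<in>heis_idx n. heis_br n a b c * wedge1 c R U) =
      (\<Sum>c\<in>heis_idx n. if c = 0 then heis_br n a b 0 * wedge1 0 R U else (0::'k))"
    by (rule sum.cong) (simp_all add: heis_br_def)
  also have "\<dots> = heis_br n a b 0 * wedge1 0 R U" by (simp add: heis_idx_def)
  finally show ?thesis using assms by (simp add: heis_br_def wedge1_def)
qed

lemma ce_d_basis_char2:
  assumes "CHAR('k::field) = 2" and "finite S"
  shows "(ce_d_basis n S :: nat set \<Rightarrow> 'k) = char2_boundary n S"
proof
  fix U
  define P where "P a \<longleftrightarrow> a \<in> {1..n} \<and> 0 \<notin> S \<and> U = insert 0 (S - pair n a)" for a
  have summand: "(if a < b then (-1) ^ (pos S a + pos S b) *
        (\<Sum>c\<in>heis_idx n. heis_br n a b c * wedge1 c (S - {a, b}) U) else 0) =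
      (if b = a + n then if P a then 1 else 0 else (0::'k))" for a b
  proof (cases "a < b")
    case True
    have "(-1::'k) ^ (pos S a + pos S b) = 1" by (simp add: uminus_CHAR_2[OF assms(1)])
    then show ?thesis using True by (auto simp: sum_heis_br_wedge1 P_def pair_def)
  qed (auto simp: P_def)
  have "ce_d_basis n S U = (\<Sum>a\<in>S. \<Sum>b\<in>S. if b = a + n then if P a then 1 else 0 else (0::'k))"
    by (simp only: ce_d_basis_def summand)
  also have "\<dots> = (\<Sum>a\<in>S. if a + n \<in> S then if P a then 1 else 0 else 0)"
    by (simp only: sum.delta[OF assms(2)])
  also have "\<dots> = (\<Sum>a\<in>{a \<in> S. a + n \<in> S \<and> P a}. 1)"
    unfolding sum.inter_filter[OF assms(2)] by (intro sum.cong) auto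
  also have "{a \<in> S. a + n \<in> S \<and> P a} = {a \<in> full_pairs n S. 0 \<notin> S \<and> U = insert 0 (S - pair n a)}"
    by (auto simp: P_def full_pairs_def pair_def)
  also have "(\<Sum>a\<in>\<dots>. 1) = char2_boundary n S U"
    unfolding sum.inter_filter[OF finite_full_pairs] by (simp add: char2_boundary_def)
  finally show "ce_d_basis n S U = (char2_boundary n S U :: 'k)" .
qed

lemma ce_d_char2:
  assumes "CHAR('k::field) = 2"
  shows "(ce_d n q f :: nat set \<Rightarrow> 'k) = (\<lambda>U. \<Sum>S\<in>ce_basis n q. f S * char2_boundary n S U)"
  unfolding ce_d_def
  by (intro ext sum.cong refl) (simp add: ce_d_basis_char2[OF assms ce_basis_finite])

section \<open>Ranks of the differentials\<close>

definition ce_unit :: "nat set \<Rightarrow> nat set \<Rightarrow> 'k::field" where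
  "ce_unit S T = (if T = S then 1 else 0)"

lemma ce_unit_in_ce_chains: "S \<in> ce_basis n q \<Longrightarrow> ce_unit S \<in> ce_chains n q"
  by (simp add: ce_chains_def ce_unit_def)

lemma ce_d_ce_unit:
  assumes "CHAR('k::field) = 2" and "S \<in> ce_basis n q"
  shows "ce_d n q (ce_unit S) = (char2_boundary n S :: nat set \<Rightarrow> 'k)"
proof -
  have "(\<Sum>T\<in>ce_basis n q. ce_unit S T * char2_boundary n T U) =
      (\<Sum>T\<in>ce_basis n q. if T = S then char2_boundary n T U else (0::'k))" for U
    by (rule sum.cong) (simp_all add: ce_unit_def)
  then show ?thesis using assms(2) by (simp add: ce_d_char2[OF assms(1)] fun_eq_iff finite_ce_basis)
qed

lemma linear_ce_d: "Vector_Spaces.linear fscale fscale (ce_d n q :: (nat set \<Rightarrow> 'k::field) \<Rightarrow> _)"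
  by (simp add: Vector_Spaces.linear_iff chains.vector_space_axioms ce_d_def fun_eq_iff
      sum.distrib sum_distrib_left algebra_simps)

lemma ce_chains_subspace: "chains.subspace (ce_chains n q)"
  by (auto simp: chains.subspace_def ce_chains_def) (metis add.right_neutral)

lemma ce_chains_span:
  "(ce_chains n q :: (nat set \<Rightarrow> 'k::field) set) \<subseteq> chains.span (ce_unit ` ce_basis n q)"
proof
  fix f :: "nat set \<Rightarrow> 'k" assume f: "f \<in> ce_chains n q"
  have "f = (\<Sum>S\<in>ce_basis n q. fscale (f S) (ce_unit S))"
  proof
    fix T
    have "(\<Sum>S\<in>ce_basis n q. f S * ce_unit S T) = (\<Sum>S\<in>ce_basis n q. if T = S then f S else 0)"
      by (rule sum.cong) (simp_all add: ce_unit_def)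
    then show "f T = (\<Sum>S\<in>ce_basis n q. fscale (f S) (ce_unit S)) T"
      using f by (auto simp: sum_fun_apply ce_chains_def finite_ce_basis)
  qed
  also have "\<dots> \<in> chains.span (ce_unit ` ce_basis n q)"
    by (intro chains.span_sum chains.span_scale chains.span_base imageI)
  finally show "f \<in> chains.span (ce_unit ` ce_basis n q)" .
qed

lemma dim_ce_chains: "chains.dim (ce_chains n q :: (nat set \<Rightarrow> 'k::field) set) = (2*n+1) choose q"
  unfolding card_ce_basis[symmetric]
  by (rule chains_dim_biorthogonal[where g = ce_unit and l = "\<lambda>S. S"])
    (auto simp: finite_ce_basis ce_unit_in_ce_chains ce_chains_span ce_unit_def)

definition pivot_in_sets :: "nat \<Rightarrow> nat \<Rightarrow> nat set set" where
  "pivot_in_sets n q = {T \<in> ce_basis n q. pivot_in n T}"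

lemma char2_boundary_in_span:
  assumes "CHAR('k::field) = 2" and S: "S \<in> ce_basis n q"
  shows "(char2_boundary n S :: nat set \<Rightarrow> 'k) \<in> chains.span (char2_boundary n ` pivot_in_sets n q)"
proof -
  consider "0 \<in> S \<or> transversal n S" | "pivot_in n S" | "pivot_out n S"
    by (auto simp: pivot_in_def pivot_out_def)
  then show ?thesis
  proof cases
    case 1
    then show ?thesis by (simp add: char2_boundary_eq_0 chains.span_zero)
  next
    case 2
    then show ?thesis using S by (intro chains.span_base) (simp add: pivot_in_sets_def)
  next
    case 3
    interpret pivot_out_set n S by unfold_locales (fact 3)
    have "char2_boundary n S =
        - (\<Sum>i\<in>full_pairs n S. char2_boundary n (pivot_swap n S i) :: nat set \<Rightarrow> 'k)"
      using char2_boundary_cancel[OF assms(1)]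
      by (simp add: fun_eq_iff sum_fun_apply eq_neg_iff_add_eq_0)
    also have "\<dots> \<in> chains.span (char2_boundary n ` pivot_in_sets n q)"
      using pivot_in_pivot_swap pivot_swap_in_ce_basis[OF S]
      by (intro chains.span_neg chains.span_sum chains.span_base) (simp add: pivot_in_sets_def)
    finally show ?thesis .
  qed
qed

lemma dim_ce_boundaries:
  assumes "CHAR('k::field) = 2"
  shows "chains.dim (ce_d n q ` (ce_chains n q :: (nat set \<Rightarrow> 'k) set)) = card (pivot_in_sets n q)"
proof (rule chains_dim_biorthogonal[where g = "char2_boundary n" and l = "lead_face n"])
  show "finite (pivot_in_sets n q)"
    using finite_ce_basis by (simp add: pivot_in_sets_def)
  show "char2_boundary n T' (lead_face n T) = (if T' = T then 1 else (0::'k))"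
    if "T \<in> pivot_in_sets n q" "T' \<in> pivot_in_sets n q" for T T'
    using that by (intro char2_boundary_lead_face) (simp_all add: pivot_in_sets_def)
  show "char2_boundary n ` pivot_in_sets n q \<subseteq> ce_d n q ` (ce_chains n q :: (nat set \<Rightarrow> 'k) set)"
  proof
    fix b assume "b \<in> (char2_boundary n ` pivot_in_sets n q :: (nat set \<Rightarrow> 'k) set)"
    then obtain T where "T \<in> ce_basis n q" "b = char2_boundary n T"
      by (auto simp: pivot_in_sets_def)
    then show "b \<in> ce_d n q ` ce_chains n q"
      using ce_d_ce_unit[OF assms] ce_unit_in_ce_chains by (metis image_eqI)
  qed
  show "ce_d n q ` ce_chains n q \<subseteq>
      chains.span (char2_boundary n ` pivot_in_sets n q :: (nat set \<Rightarrow> 'k) set)"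
  proof
    fix b assume "b \<in> ce_d n q ` (ce_chains n q :: (nat set \<Rightarrow> 'k) set)"
    then obtain f :: "nat set \<Rightarrow> 'k" where "b = ce_d n q f" by auto
    then have "b = (\<Sum>S\<in>ce_basis n q. fscale (f S) (char2_boundary n S))"
      by (simp add: ce_d_char2[OF assms] fun_eq_iff sum_fun_apply)
    also have "\<dots> \<in> chains.span (char2_boundary n ` pivot_in_sets n q)"
      by (intro chains.span_sum chains.span_scale char2_boundary_in_span[OF assms])
    finally show "b \<in> chains.span (char2_boundary n ` pivot_in_sets n q)" .
  qed
qed

lemma dim_ce_cycles:
  assumes "CHAR('k::field) = 2"
  shows "chains.dim {f \<in> (ce_chains n q :: (nat set \<Rightarrow> 'k) set). ce_d n q f = 0} =
    (2 * n + 1 choose q) - card (pivot_in_sets n q)"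
proof -
  interpret vector_space_pair "fscale :: 'k \<Rightarrow> _ \<Rightarrow> nat set \<Rightarrow> 'k" "fscale :: 'k \<Rightarrow> _ \<Rightarrow> nat set \<Rightarrow> 'k" ..
  have "chains.dim {f \<in> (ce_chains n q :: (nat set \<Rightarrow> 'k) set). ce_d n q f = 0} +
      chains.dim (ce_d n q ` (ce_chains n q :: (nat set \<Rightarrow> 'k) set)) =
      chains.dim (ce_chains n q :: (nat set \<Rightarrow> 'k) set)"
    by (rule dim_kernel_plus_dim_image[OF linear_ce_d ce_chains_subspace
          finite_imageI[OF finite_ce_basis] ce_chains_span])
  then show ?thesis by (simp add: dim_ce_boundaries[OF assms] dim_ce_chains)
qed

lemma heis_homology_dim_char2:
  assumes "CHAR('k::field) = 2"
  shows "heis_homology_dim TYPE('k) n i =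
    (2 * n + 1 choose i) - card (pivot_in_sets n i) - card (pivot_in_sets n (Suc i))"
  by (simp add: heis_homology_dim_def dim_ce_cycles[OF assms] dim_ce_boundaries[OF assms])

section \<open>Counting the pivot-in sets\<close>

lemma pivot_in_sets_empty:
  assumes "q < 2"
  shows "pivot_in_sets n q = {}"
proof -
  have "2 \<le> card T" if T: "T \<in> ce_basis n q" "pivot_in n T" for T
  proof -
    have "pivot n T \<in> full_pairs n T" using pivot_in_full_pairs[OF T(2)] .
    then have "card (pair n (pivot n T)) = 2" "pair n (pivot n T) \<subseteq> T"
      by (simp_all add: full_pairs_def card_pair)
    then show ?thesis using card_mono[OF ce_basis_finite[OF T(1)]] by metis
  qed
  then show ?thesis using assms by (auto simp: pivot_in_sets_def ce_basis_def)
qed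

lemma bij_betw_pivot_out_pivot_in:
  "bij_betw (\<lambda>S. S \<union> pair n (pivot n S))
    {S \<in> ce_basis n q. pivot_out n S} (pivot_in_sets n (q + 2))"
proof (rule bij_betw_byWitness[where f' = "\<lambda>T. T - pair n (pivot n T)"])
  show "\<forall>S\<in>{S \<in> ce_basis n q. pivot_out n S}.
      S \<union> pair n (pivot n S) - pair n (pivot n (S \<union> pair n (pivot n S))) = S"
  proof
    fix S assume "S \<in> {S \<in> ce_basis n q. pivot_out n S}"
    then interpret pivot_out_set n S by unfold_locales simp
    show "S \<union> pair n v - pair n (pivot n (S \<union> pair n v)) = S"
      unfolding pivot_add_pivot_pair(2) using pivot_out_facts by (auto simp: pair_def)
  qed
  show "\<forall>T\<in>pivot_in_sets n (q + 2).
      T - pair n (pivot n T) \<union> pair n (pivot n (T - pair n (pivot n T))) = T"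
  proof
    fix T assume "T \<in> pivot_in_sets n (q + 2)"
    then have T: "pivot_in n T" by (simp add: pivot_in_sets_def)
    have "pair n (pivot n T) \<subseteq> T" using pivot_in_full_pairs[OF T] by (simp add: full_pairs_def)
    then show "T - pair n (pivot n T) \<union> pair n (pivot n (T - pair n (pivot n T))) = T"
      unfolding pivot_in_remove_pivot_pair(2)[OF T] by blast
  qed
  show "(\<lambda>S. S \<union> pair n (pivot n S)) ` {S \<in> ce_basis n q. pivot_out n S} \<subseteq> pivot_in_sets n (q + 2)"
  proof clarify
    fix S assume S: "S \<in> ce_basis n q" "pivot_out n S"
    interpret pivot_out_set n S by unfold_locales (fact S(2))
    have "card (S \<union> pair n v) = card S + card (pair n v)"
      by (rule card_Un_disjoint)
        (use ce_basis_finite[OF S(1)] pivot_out_facts in \<open>auto simp: pair_def\<close>)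
    then show "S \<union> pair n v \<in> pivot_in_sets n (q + 2)"
      using S(1) pivot_out_facts(3) pivot_in_add_pivot_pair card_pair[OF pivot_out_facts(3)]
      by (auto simp: pivot_in_sets_def ce_basis_def heis_idx_def pair_def)
  qed
  show "(\<lambda>T. T - pair n (pivot n T)) ` pivot_in_sets n (q + 2) \<subseteq> {S \<in> ce_basis n q. pivot_out n S}"
  proof clarify
    fix T assume T: "T \<in> pivot_in_sets n (q + 2)"
    then have v: "pivot n T \<in> full_pairs n T" "pivot_in n T" "T \<in> ce_basis n (q + 2)"
      using pivot_in_full_pairs by (auto simp: pivot_in_sets_def)
    have "card (T - pair n (pivot n T)) = card T - card (pair n (pivot n T))"
      using v(1) ce_basis_finite[OF v(3)]
      by (intro card_Diff_subset) (auto simp: full_pairs_def pair_def)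
    then show "T - pair n (pivot n T) \<in> ce_basis n q \<and> pivot_out n (T - pair n (pivot n T))"
      using v card_pair pivot_in_remove_pivot_pair(1)
      by (auto simp: ce_basis_def full_pairs_def)
  qed
qed

lemma card_transversal:
  assumes "A \<subseteq> {1..n}"
  shows "card (A \<union> (\<lambda>i. i + n) ` ({1..n} - A)) = n"
proof -
  have "finite A" using assms by (rule finite_subset) simp
  then have "card (A \<union> (\<lambda>i. i + n) ` ({1..n} - A)) = card A + card ((\<lambda>i. i + n) ` ({1..n} - A))"
    using assms by (intro card_Un_disjoint) auto
  also have "card ((\<lambda>i. i + n) ` ({1..n} - A)) = card ({1..n} - A)"
    by (rule card_image) (simp add: inj_on_def)
  also have "\<dots> = n - card A"
    using card_Diff_subset[OF \<open>finite A\<close> assms] by simp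
  finally show ?thesis using card_mono[OF _ assms] by simp
qed

lemma bij_betw_transversal:
  "bij_betw (\<lambda>A. A \<union> (\<lambda>i. i + n) ` ({1..n} - A)) (Pow {1..n}) {S. S \<subseteq> {1..2 * n} \<and> transversal n S}"
proof (rule bij_betw_byWitness[where f' = "\<lambda>S. S \<inter> {1..n}"])
  show "\<forall>A\<in>Pow {1..n}. (A \<union> (\<lambda>i. i + n) ` ({1..n} - A)) \<inter> {1..n} = A" by auto
  show "\<forall>S\<in>{S. S \<subseteq> {1..2 * n} \<and> transversal n S}.
      S \<inter> {1..n} \<union> (\<lambda>i. i + n) ` ({1..n} - S \<inter> {1..n}) = S"
  proof clarify
    fix S assume S: "S \<subseteq> {1..2 * n}" "transversal n S"
    show "S \<inter> {1..n} \<union> (\<lambda>i. i + n) ` ({1..n} - S \<inter> {1..n}) = S"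
    proof (intro equalityI subsetI)
      fix x assume "x \<in> S \<inter> {1..n} \<union> (\<lambda>i. i + n) ` ({1..n} - S \<inter> {1..n})"
      then show "x \<in> S" using S(2) by (auto simp: transversal_def balanced_def)
    next
      fix x assume x: "x \<in> S"
      show "x \<in> S \<inter> {1..n} \<union> (\<lambda>i. i + n) ` ({1..n} - S \<inter> {1..n})"
      proof (cases "x \<le> n")
        case True
        then show ?thesis using x S(1) by auto
      next
        case False
        define i where "i = x - n"
        have i: "i \<in> {1..n}" "x = i + n" using False x S(1) by (auto simp: i_def)
        then have "i \<notin> S" using S(2) x by (auto simp: transversal_def balanced_def)
        then show ?thesis using i by auto
      qed
    qed
  qed
  show "(\<lambda>A. A \<union> (\<lambda>i. i + n) ` ({1..n} - A)) ` Pow {1..n} \<subseteq> {S. S \<subseteq> {1..2 * n} \<and> transversal n S}"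
    by (auto simp: transversal_def balanced_def)
  show "(\<lambda>S. S \<inter> {1..n}) ` {S. S \<subseteq> {1..2 * n} \<and> transversal n S} \<subseteq> Pow {1..n}" by auto
qed

lemma ce_basis_without_0: "{S \<in> ce_basis n q. 0 \<notin> S} = {S. S \<subseteq> {1..2 * n} \<and> card S = q}"
  by (auto simp: ce_basis_def heis_idx_def subset_iff Suc_le_eq) (metis not_gr0)

lemma card_transversal_sets:
  "card {S \<in> ce_basis n q. 0 \<notin> S \<and> transversal n S} = (if q = n then 2 ^ n else 0)"
proof -
  let ?f = "\<lambda>A. A \<union> (\<lambda>i. i + n) ` ({1..n} - A)"
  have card_n: "card S = n" if "S \<subseteq> {1..2 * n}" "transversal n S" for S
  proof -
    have "S \<in> ?f ` Pow {1..n}" using bij_betw_imp_surj_on[OF bij_betw_transversal] that by blast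
    then show ?thesis using card_transversal by auto
  qed
  have "{S \<in> ce_basis n q. 0 \<notin> S \<and> transversal n S} =
      {S. S \<subseteq> {1..2 * n} \<and> transversal n S \<and> card S = q}"
    using ce_basis_without_0[of n q] by blast
  also have "\<dots> = (if q = n then {S. S \<subseteq> {1..2 * n} \<and> transversal n S} else {})"
    using card_n by auto
  finally show ?thesis
    using bij_betw_same_card[OF bij_betw_transversal[of n]] by (simp add: card_Pow)
qed

lemma card_pivot_in_sets_rec:
  "card (pivot_in_sets n q) + card (pivot_in_sets n (q + 2)) + (if q = n then 2 ^ n else 0) =
    2 * n choose q"
proof -
  define Ins where "Ins = pivot_in_sets n q"
  define Tr where "Tr = {S \<in> ce_basis n q. 0 \<notin> S \<and> transversal n S}"
  define Outs where "Outs = {S \<in> ce_basis n q. pivot_out n S}"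
  have fin: "finite Ins" "finite Tr" "finite Outs"
    using finite_ce_basis[of n q] by (auto simp: Ins_def Tr_def Outs_def pivot_in_sets_def)
  have part: "{S \<in> ce_basis n q. 0 \<notin> S} = Ins \<union> Tr \<union> Outs"
    by (auto simp: Ins_def Tr_def Outs_def pivot_in_sets_def pivot_in_def pivot_out_def)
  have disj: "Ins \<inter> Tr = {}" "(Ins \<union> Tr) \<inter> Outs = {}"
    by (auto simp: Ins_def Tr_def Outs_def pivot_in_sets_def pivot_in_def pivot_out_def)
  have "2 * n choose q = card {S \<in> ce_basis n q. 0 \<notin> S}"
    by (simp add: ce_basis_without_0 n_subsets)
  also have "\<dots> = card Ins + card Tr + card Outs"
    unfolding part using fin disj by (simp add: card_Un_disjoint)
  finally have "card Ins + card Tr + card Outs = 2 * n choose q" ..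
  then show ?thesis
    using card_transversal_sets bij_betw_same_card[OF bij_betw_pivot_out_pivot_in]
    by (simp add: Ins_def Tr_def Outs_def)
qed

text \<open>Makes the truncated subtraction in \<open>heis_homology_dim\<close> exact.\<close>

lemma card_pivot_in_sets_le:
  "card (pivot_in_sets n i) + card (pivot_in_sets n (Suc i)) \<le> 2 * n + 1 choose i"
proof (cases i)
  case 0
  then show ?thesis by (simp add: pivot_in_sets_empty)
next
  case (Suc j)
  have "card (pivot_in_sets n (Suc j)) \<le> 2 * n choose Suc j"
    using card_pivot_in_sets_rec[of n "Suc j"] by linarith
  moreover have "card (pivot_in_sets n (Suc (Suc j))) \<le> 2 * n choose j"
    using card_pivot_in_sets_rec[of n j] by simp
  ultimately show ?thesis using Suc by simp
qed

section \<open>The generating function\<close>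

lemma fps_nth_one_plus_X_power:
  "fps_nth ((1 + fps_X) ^ m :: 'a::field_char_0 fps) k = of_nat (m choose k)"
  by (simp add: fps_binomial_of_nat[symmetric] binomial_gbinomial)

lemma fps_pivot_count_recurrence:
  fixes t :: "nat \<Rightarrow> real"
  assumes t0: "t 0 = 0" and t1: "t 1 = 0"
    and rec: "\<And>q. t q + t (q + 2) + (if q = n then 2 ^ n else 0) = real (2 * n choose q)"
  shows "(1 + fps_X ^ 2) * Abs_fps t =
    fps_X ^ 2 * ((1 + fps_X) ^ (2 * n) - (fps_const 2 * fps_X) ^ n)"
proof (rule fps_ext)
  fix k
  show "fps_nth ((1 + fps_X ^ 2) * Abs_fps t) k =
      fps_nth (fps_X ^ 2 * ((1 + fps_X) ^ (2 * n) - (fps_const 2 * fps_X) ^ n)) k"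
  proof (cases "k < 2")
    case True
    then have "k = 0 \<or> k = 1" by auto
    then show ?thesis using t0 t1 by (auto simp: distrib_right fps_X_power_mult_nth)
  next
    case False
    then obtain j where "k = j + 2" by (metis add.commute le_Suc_ex not_less)
    then show ?thesis
      using rec[of j] by (cases "j = n")
        (simp_all add: distrib_right fps_X_power_mult_nth fps_nth_one_plus_X_power power_mult_distrib)
  qed
qed

lemma hilbert_series_from_pivot_counts:
  fixes t :: "nat \<Rightarrow> real"
  assumes t0: "t 0 = 0" and t1: "t 1 = 0"
    and rec: "\<And>q. t q + t (q + 2) + (if q = n then 2 ^ n else 0) = real (2 * n choose q)"
  shows "Abs_fps (\<lambda>i. real (2 * n + 1 choose i) - t i - t (Suc i)) =
    ((1 + fps_X ^ 3) * (1 + fps_X) ^ (2 * n) + (fps_X + fps_X ^ 2) * (fps_const 2 * fps_X) ^ n)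
      / (1 + fps_X ^ 2)"
proof -
  define X where "X = (fps_X :: real fps)"
  define T where "T = Abs_fps t"
  define T' where "T' = Abs_fps (\<lambda>i. t (Suc i))"
  define M where "M = (1 + X) ^ (2 * n) - (fps_const 2 * X) ^ n"
  have T_rec: "(1 + X ^ 2) * T = X ^ 2 * M"
    unfolding X_def T_def M_def by (rule fps_pivot_count_recurrence[OF t0 t1 rec])
  have shift: "X * T' = T" by (rule fps_ext) (simp add: X_def T_def T'_def t0 fps_X_mult_nth)
  have "X * ((1 + X ^ 2) * T') = (1 + X ^ 2) * (X * T')" by (simp only: ac_simps)
  also have "\<dots> = X ^ 2 * M" by (simp only: shift T_rec)
  also have "\<dots> = X * (X * M)" by (simp add: power2_eq_square)
  finally have "X * ((1 + X ^ 2) * T') = X * (X * M)" .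
  then have T'_rec: "(1 + X ^ 2) * T' = X * M" by (simp add: X_def)
  have lhs: "Abs_fps (\<lambda>i. real (2 * n + 1 choose i) - t i - t (Suc i)) =
      (1 + X) ^ (2 * n + 1) - T - T'"
  proof (rule fps_ext)
    have "fps_nth ((1 + X) ^ (2 * n + 1)) i = real (2 * n + 1 choose i)" for i
      unfolding X_def by (rule fps_nth_one_plus_X_power)
    then show "fps_nth (Abs_fps (\<lambda>i. real (2 * n + 1 choose i) - t i - t (Suc i))) i =
        fps_nth ((1 + X) ^ (2 * n + 1) - T - T') i" for i
      by (simp only: fps_sub_nth T_def T'_def fps_nth_Abs_fps)
  qed
  have "((1 + X) ^ (2 * n + 1) - T - T') * (1 + X ^ 2) =
      (1 + X ^ 3) * (1 + X) ^ (2 * n) + (X + X ^ 2) * (fps_const 2 * X) ^ n"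
  proof -
    have "((1 + X) ^ (2 * n + 1) - T - T') * (1 + X ^ 2) =
        (1 + X) ^ (2 * n + 1) * (1 + X ^ 2) - (1 + X ^ 2) * T - (1 + X ^ 2) * T'"
      by (simp add: algebra_simps)
    also have "\<dots> = (1 + X) * (1 + X ^ 2) * (1 + X) ^ (2 * n) - X ^ 2 * M - X * M"
      unfolding T_rec T'_rec by (simp add: algebra_simps)
    finally show ?thesis by (simp add: M_def algebra_simps power2_eq_square power3_eq_cube)
  qed
  moreover have "1 + X ^ 2 \<noteq> 0"
  proof
    assume "1 + X ^ 2 = 0"
    then have "fps_nth (1 + X ^ 2) 0 = 0" by simp
    then show False by (simp add: X_def)
  qed
  ultimately show ?thesis
    unfolding lhs X_def by (metis nonzero_mult_div_cancel_right)
qed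

theorem mainTheorem1:
  fixes n :: nat
  assumes "CHAR('k::field) = 2" and "n \<ge> 1"
  shows "Abs_fps (\<lambda>i. real (heis_homology_dim TYPE('k) n i)) =
    ((1 + fps_X ^ 3) * (1 + fps_X) ^ (2 * n) + (fps_X + fps_X ^ 2) * (fps_const 2 * fps_X) ^ n)
      / (1 + fps_X ^ 2)"
proof -
  define t where "t q = real (card (pivot_in_sets n q))" for q
  have "real (heis_homology_dim TYPE('k) n i) = real (2 * n + 1 choose i) - t i - t (Suc i)" for i
    using heis_homology_dim_char2[OF assms(1)] card_pivot_in_sets_le[of n i]
    by (simp add: t_def of_nat_diff)
  moreover have "Abs_fps (\<lambda>i. real (2 * n + 1 choose i) - t i - t (Suc i)) =
      ((1 + fps_X ^ 3) * (1 + fps_X) ^ (2 * n) + (fps_X + fps_X ^ 2) * (fps_const 2 * fps_X) ^ n)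
        / (1 + fps_X ^ 2)"
  proof (rule hilbert_series_from_pivot_counts)
    show "t 0 = 0" "t 1 = 0" by (simp_all add: t_def pivot_in_sets_empty)
    show "t q + t (q + 2) + (if q = n then 2 ^ n else 0) = real (2 * n choose q)" for q
      using arg_cong[OF card_pivot_in_sets_rec[of n q], of real]
      by (cases "q = n") (simp_all add: t_def)
  qed
  ultimately show ?thesis by simp
qed

end
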